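(* Let $T,\nu,\varepsilon>0$ and let $q_{\nu,\varepsilon}$ be the viscous solution described in the context. Let $c_0:=\inf_{x\in\mathbb R}o(x)>0$ and $\tilde K:=\|V_\varepsilon'\|_{L^\infty([c_0,\infty))}$. Then for all $(t,x)\in[0,T]\times\mathbb R$, $q_{\nu,\varepsilon}(t,x)\ge-\frac{\nu\|o''\|_{L^\infty(\mathbb R)}}{\|o'\|_{L^\infty(\mathbb R)}\tilde K}\Big(-1+\exp\big(\tilde K\|o'\|_{L^\infty(\mathbb R)}t\big)\Big).$
   Context: $V\in C^\infty([0,\infty))$ satisfies: $\lim_{x\to\infty}V(x)=1$; $V(0)=0$; $V>0$ on $(0,\infty)$; $(-1)^{k+1}V^{(k)}>0$ on $[0,\infty)$ for all $k\in\mathbb N$; $V^{(k)}\in L^\infty([0,\infty))$ for all $k$ and $\|V\|_{L^\infty([0,\infty))}=1$; $\sup_{\varepsilon>0}\|V_\varepsilon'\|_{L^\infty([\tilde c,\infty))}<\infty$ for all $\tilde c>0$; $-\infty<\inf_{y\ge0}\frac{V''(y)}{V'(y)}\le\sup_{y\ge0}\frac{V''(y)}{V'(y)}<0$; and $\lim_{x\to\infty}xV_\varepsilon^{(k)}(x)=0$ for all $k$. Here $V_\varepsilon(x):=V(x/\varepsilon)$. The data: $q_0\in BV(\mathbb R;\mathbb R_{\ge0})$; $o\in W^{6,\infty}(\mathbb R)$, $o'\in W^{6,1}(\mathbb R)$, $\operatorname{ess\,inf}_{x}(o(x)-q_0(x))>0$, and $\lim_{x\to\pm\infty}o(x)$ exist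 in $\mathbb R$. $q_{0,\nu}:=\varphi_\nu*q_0$ with $\varphi_\nu(x)=\nu^{-1}\varphi(x/\nu)$, $\varphi$ the standard mollifier. $q_{\nu,\varepsilon}$ is the unique $H^5((0,T)\times\mathbb R)$ solution of $\partial_tq+\partial_x\big(V_\varepsilon(o(x)-q)q\big)=\nu\partial_x^2(q-o)$ on $(0,T)\times\mathbb R$, $q(0,\cdot)=q_{0,\nu}$. *)

theory Defs
  imports "HOL-Analysis.Analysis"
begin

definition std_mollifier_raw :: "real \<Rightarrow> real" where
  "std_mollifier_raw x = (if \<bar>x\<bar> < 1 then exp (1 / (x\<^sup>2 - 1)) else 0)"

definition std_mollifier :: "real \<Rightarrow> real" where
  "std_mollifier x = std_mollifier_raw x / (LINT y|lborel. std_mollifier_raw y)"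

definition mollifier :: "real \<Rightarrow> real \<Rightarrow> real" where
  "mollifier \<nu> x = std_mollifier (x / \<nu>) / \<nu>"

definition mollify :: "real \<Rightarrow> (real \<Rightarrow> real) \<Rightarrow> real \<Rightarrow> real" where
  "mollify \<nu> f x = (LINT y|lborel. mollifier \<nu> (x - y) * f y)"

definition bounded_variation :: "(real \<Rightarrow> real) \<Rightarrow> bool" where
  "bounded_variation f \<longleftrightarrow>
     (\<exists>M. \<forall>xs::real list. sorted xs \<longrightarrow>
        (\<Sum>i<length xs - 1. \<bar>f (xs ! Suc i) - f (xs ! i)\<bar>) \<le> M)"

text \<open>Hypotheses on V. Vd k is the k-th derivative of V = Vd 0 (on [0,infinity)).\<close>
definition admissible_V :: "(nat \<Rightarrow> real \<Rightarrow> real) \<Rightarrow> bool" where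
  "admissible_V Vd \<longleftrightarrow>
     (\<forall>k. \<forall>x\<ge>0. (Vd k has_real_derivative Vd (Suc k) x) (at x within {0..})) \<and>
     (Vd 0 \<longlongrightarrow> 1) at_top \<and>
     Vd 0 0 = 0 \<and>
     (\<forall>x>0. Vd 0 x > 0) \<and>
     (\<forall>k\<ge>1. \<forall>x\<ge>0. (-1) ^ (k + 1) * Vd k x > 0) \<and>
     (\<forall>k. \<exists>B. \<forall>x\<ge>0. \<bar>Vd k x\<bar> \<le> B) \<and>
     (SUP x\<in>{0..}. \<bar>Vd 0 x\<bar>) = 1 \<and>
     (\<forall>c>0. \<exists>B. \<forall>\<epsilon>>0. \<forall>x\<ge>c. \<bar>Vd 1 (x / \<epsilon>) / \<epsilon>\<bar> \<le> B) \<and>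
     (\<exists>a b. b < 0 \<and> (\<forall>y\<ge>0. a \<le> Vd 2 y / Vd 1 y \<and> Vd 2 y / Vd 1 y \<le> b)) \<and>
     (\<forall>\<epsilon>>0. \<forall>k\<ge>1. ((\<lambda>x. x * (Vd k (x / \<epsilon>) / \<epsilon> ^ k)) \<longlongrightarrow> 0) at_top)"

text \<open>Hypotheses on o: od k is the k-th derivative of o = od 0.
  o in W^{6,infinity}: od 0..od 5 bounded, od 5 Lipschitz (od 6 its a.e./weak derivative);
  o' in W^{6,1}: od 1..od 6 Lebesgue integrable; limits at +-infinity exist.\<close>
definition admissible_o :: "(nat \<Rightarrow> real \<Rightarrow> real) \<Rightarrow> bool" where
  "admissible_o od \<longleftrightarrow>
     (\<forall>k<5. \<forall>x. (od k has_real_derivative od (Suc k) x) (at x)) \<and>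
     (\<forall>k\<le>5. bounded (range (od k))) \<and>
     (\<exists>L. \<forall>x y. \<bar>od 5 x - od 5 y\<bar> \<le> L * \<bar>x - y\<bar>) \<and>
     (\<forall>a b. a \<le> b \<longrightarrow> od 5 b - od 5 a = (LINT y:{a..b}|lborel. od 6 y)) \<and>
     (\<forall>k\<in>{1..6}. integrable lborel (od k)) \<and>
     (\<exists>l. (od 0 \<longlongrightarrow> l) at_top) \<and>
     (\<exists>l. (od 0 \<longlongrightarrow> l) at_bot)"


text \<open>q : [0,T] x R -> R (argument (t,x)) is a solution of
  q_t + (V_eps(o(x) - q) q)_x = nu (q - o)_xx on (0,T) x R, q(0,.) = q_init,
  in H^5((0,T) x R). H^5 membership is rendered classically: D i j denotes the
  partial derivative d_t^i d_x^j q, these exist and are continuous on the open strip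
  for i + j <= 5 and are square integrable there; q is continuous up to t = 0 and t = T
  (H^5 embeds into C^3 of the closed strip).\<close>
definition viscous_solution ::
  "(nat \<Rightarrow> real \<Rightarrow> real) \<Rightarrow> (nat \<Rightarrow> real \<Rightarrow> real) \<Rightarrow> real \<Rightarrow> real \<Rightarrow> real \<Rightarrow>
   (real \<Rightarrow> real) \<Rightarrow> (real \<times> real \<Rightarrow> real) \<Rightarrow> bool" where
  "viscous_solution Vd od \<epsilon> \<nu> T q_init q \<longleftrightarrow>
     (\<exists>D :: nat \<Rightarrow> nat \<Rightarrow> real \<times> real \<Rightarrow> real.
        D 0 0 = q \<and>
        (\<forall>i j. i + j < 5 \<longrightarrow> (\<forall>t\<in>{0<..<T}. \<forall>x.
            ((\<lambda>s. D i j (s, x)) has_real_derivative D (Suc i) j (t, x)) (at t) \<and>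
            ((\<lambda>y. D i j (t, y)) has_real_derivative D i (Suc j) (t, x)) (at x))) \<and>
        (\<forall>i j. i + j \<le> 5 \<longrightarrow>
            continuous_on ({0<..<T} \<times> UNIV) (D i j) \<and>
            set_integrable lborel ({0<..<T} \<times> UNIV) (\<lambda>z. (D i j z)\<^sup>2)) \<and>
        continuous_on ({0..T} \<times> UNIV) q \<and>
        (\<forall>x. q (0, x) = q_init x) \<and>
        (\<forall>t\<in>{0<..<T}. \<forall>x.
            ((\<lambda>y. Vd 0 ((od 0 y - q (t, y)) / \<epsilon>) * q (t, y)) has_real_derivative
               (\<nu> * (D 0 2 (t, x) - od 2 x) - D 1 0 (t, x))) (at x)))"

end

theory Submission
  imports Defs
begin

text \<open>The bound comes from a minimum principle. Where \<open>q\<close> first touches a negative barrier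
  \<open>B(t)\<close> from above, at an interior point \<open>(t, x)\<close>, one has \<open>q\<^sub>x = 0\<close> and \<open>q\<^sub>x\<^sub>x \<ge> 0\<close>;
  there the flux derivative reduces to \<open>V\<^sub>\<epsilon>'(o - q) o' q\<close>, and since \<open>o - q \<ge> inf o\<close>
  the equation yields \<open>q\<^sub>t \<ge> -\<nu> \<parallel>o''\<parallel> + \<parallel>o'\<parallel> K q\<close>, with \<open>K\<close> the bound of
  \<open>V\<^sub>\<epsilon>'\<close> on \<open>[inf o, \<infinity>)\<close>. So \<open>q\<close> cannot cross any strict subsolution of
  \<open>B' = -\<nu> \<parallel>o''\<parallel> + \<parallel>o'\<parallel> K B\<close> lying below \<open>q(0, \<cdot>) \<ge> 0\<close>, and the claimed bound is the solution
  of this ODE with \<open>B(0) = 0\<close>. A first touching point exists because \<open>q(t, x) \<rightarrow> 0\<close> as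
  \<open>\<bar>x\<bar> \<rightarrow> \<infinity>\<close> uniformly in \<open>t\<close>: one-dimensional Sobolev inequalities in \<open>t\<close> and in \<open>x\<close>
  bound \<open>q(t, x)\<^sup>2\<close> by the energy \<open>q\<^sup>2 + q\<^sub>t\<^sup>2 + q\<^sub>x\<^sup>2 + q\<^sub>t\<^sub>x\<^sup>2\<close> in the slab \<open>\<bar>z - x\<bar> < 1\<close>
  of the strip, which tends to \<open>0\<close>.\<close>

section \<open>Calculus on the real line\<close>

lemma abs_two_mult_le_sum_squares: "\<bar>2 * a * b\<bar> \<le> a\<^sup>2 + (b::real)\<^sup>2"
  using sum_squares_bound[of a b] sum_squares_bound[of "-a" b] by (simp add: abs_le_iff)

lemma abs_diff_le_nn_integral_of_deriv_bound:
  fixes f f' g :: "real \<Rightarrow> real"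
  assumes "a \<le> b"
    and f': "\<And>x. x \<in> {a..b} \<Longrightarrow> (f has_real_derivative f' x) (at x)"
    and g: "continuous_on {a..b} g"
    and f'_le: "\<And>x. x \<in> {a..b} \<Longrightarrow> \<bar>f' x\<bar> \<le> g x"
  shows "ennreal \<bar>f b - f a\<bar> \<le> (\<integral>\<^sup>+x. ennreal (g x) * indicator {a..b} x \<partial>lborel)"
proof -
  have f'_int: "(f' has_integral (f b - f a)) {a..b}"
    by (intro fundamental_theorem_of_calculus[OF \<open>a \<le> b\<close>] ballI)
       (metis has_real_derivative_iff_has_vector_derivative has_field_derivative_at_within f')
  have g_int: "g integrable_on {a..b}"
    using g integrable_continuous_interval by blast
  have "\<bar>f b - f a\<bar> \<le> integral {a..b} g"
    using integral_norm_bound_integral[OF has_integral_integrable[OF f'_int] g_int] f'_le f'_int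
    by (simp add: integral_unique)
  moreover have "(\<integral>\<^sup>+x. ennreal (g x) * indicator {a..b} x \<partial>lborel) = ennreal (integral {a..b} g)"
    using f'_le g_int by (intro nn_integral_has_integral_lebesgue') (auto intro: order_trans[OF abs_ge_zero])
  ultimately show ?thesis
    by (simp add: ennreal_leI)
qed

text \<open>Integrate \<open>\<bar>f t\<bar> \<le> \<bar>f s\<bar> + \<bar>f t - f s\<bar>\<close> over \<open>s \<in> {a<..<b}\<close>.\<close>
lemma abs_le_mean_plus_nn_integral_of_deriv_bound:
  fixes f f' g :: "real \<Rightarrow> real"
  assumes t: "t \<in> {a<..<b}"
    and f': "\<And>r. r \<in> {a<..<b} \<Longrightarrow> (f has_real_derivative f' r) (at r)"
    and g: "continuous_on {a<..<b} g"
    and f'_le: "\<And>r. r \<in> {a<..<b} \<Longrightarrow> \<bar>f' r\<bar> \<le> g r"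
  shows "ennreal \<bar>f t\<bar> \<le> (\<integral>\<^sup>+r. ennreal \<bar>f r\<bar> * indicator {a<..<b} r \<partial>lborel) / ennreal (b - a)
           + (\<integral>\<^sup>+r. ennreal (g r) * indicator {a<..<b} r \<partial>lborel)"
proof -
  let ?I = "{a<..<b}"
  define M where "M = (\<integral>\<^sup>+r. ennreal (g r) * indicator ?I r \<partial>lborel)"
  define N where "N = (\<integral>\<^sup>+r. ennreal \<bar>f r\<bar> * indicator ?I r \<partial>lborel)"
  have ab: "0 < b - a" using t by simp
  have close: "ennreal \<bar>f t\<bar> \<le> ennreal \<bar>f s\<bar> + M" if s: "s \<in> ?I" for s
  proof -
    have sub: "{min s t..max s t} \<subseteq> ?I" using s t by auto
    have "ennreal \<bar>f (max s t) - f (min s t)\<bar> \<le>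
        (\<integral>\<^sup>+r. ennreal (g r) * indicator {min s t..max s t} r \<partial>lborel)"
      by (rule abs_diff_le_nn_integral_of_deriv_bound[where f'=f'])
         (use sub in \<open>auto intro!: f' f'_le continuous_on_subset[OF g]\<close>)
    also have "\<dots> \<le> M"
      unfolding M_def using sub by (intro nn_integral_mono) (auto simp: indicator_def)
    finally have "ennreal \<bar>f t - f s\<bar> \<le> M"
      by (cases "s \<le> t") (auto simp: abs_minus_commute)
    have "ennreal \<bar>f t\<bar> \<le> ennreal (\<bar>f s\<bar> + \<bar>f t - f s\<bar>)"
      by (intro ennreal_leI) linarith
    also have "\<dots> = ennreal \<bar>f s\<bar> + ennreal \<bar>f t - f s\<bar>"
      by (simp add: ennreal_plus)
    also have "\<dots> \<le> ennreal \<bar>f s\<bar> + M"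
      using \<open>ennreal \<bar>f t - f s\<bar> \<le> M\<close> by (rule add_left_mono)
    finally show ?thesis .
  qed
  have "continuous_on ?I f"
    using f' by (meson DERIV_isCont continuous_at_imp_continuous_on)
  then have "(\<lambda>r. indicator ?I r *\<^sub>R \<bar>f r\<bar>) \<in> borel_measurable borel"
    by (intro borel_measurable_continuous_on_indicator continuous_intros) auto
  then have "(\<lambda>r. ennreal (indicator ?I r *\<^sub>R \<bar>f r\<bar>)) \<in> borel_measurable lborel"
    by simp
  moreover have "(\<lambda>r. ennreal (indicator ?I r *\<^sub>R \<bar>f r\<bar>)) = (\<lambda>r. ennreal \<bar>f r\<bar> * indicator ?I r)"
    by (auto simp: indicator_def)
  ultimately have meas: "(\<lambda>r. ennreal \<bar>f r\<bar> * indicator ?I r) \<in> borel_measurable lborel"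
    by metis
  have "ennreal \<bar>f t\<bar> * ennreal (b - a) = (\<integral>\<^sup>+s. ennreal \<bar>f t\<bar> * indicator ?I s \<partial>lborel)"
    using ab by (simp add: nn_integral_cmult_indicator)
  also have "\<dots> \<le> (\<integral>\<^sup>+s. (ennreal \<bar>f s\<bar> + M) * indicator ?I s \<partial>lborel)"
    by (intro nn_integral_mono) (auto simp: indicator_def close)
  also have "\<dots> = N + M * ennreal (b - a)"
    using ab meas unfolding N_def distrib_right
    by (subst nn_integral_add) (auto simp: nn_integral_cmult_indicator)
  finally have "ennreal \<bar>f t\<bar> * ennreal (b - a) / ennreal (b - a) \<le> (N + M * ennreal (b - a)) / ennreal (b - a)"
    by (rule divide_right_mono_ennreal)
  then show ?thesis
    using ab by (simp add: ennreal_mult_divide_eq add_divide_distrib_ennreal M_def N_def)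
qed

lemma ge_at_right_endpoint_if_continuous_on:
  fixes f :: "real \<Rightarrow> real"
  assumes "continuous_on {a..b} f" "a < b" "\<And>s. s \<in> {a..<b} \<Longrightarrow> c \<le> f s"
  shows "c \<le> f b"
proof (rule tendsto_lowerbound[OF continuous_on_Icc_at_leftD[OF assms(1,2)]])
  show "\<forall>\<^sub>F s in at_left b. c \<le> f s"
    using eventually_at_left_real[OF \<open>a < b\<close>] by eventually_elim (use assms(3) in auto)
qed simp

lemma global_min_deriv_conditions:
  fixes f f' :: "real \<Rightarrow> real"
  assumes f': "\<And>y. (f has_real_derivative f' y) (at y)"
    and f'': "(f' has_real_derivative l) (at x)"
    and min: "\<And>y. f x \<le> f y"
  shows "f' x = 0" "0 \<le> l"
proof -
  show f'_0: "f' x = 0"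
    using DERIV_local_min[OF f'[of x], of 1] min by auto
  show "0 \<le> l"
  proof (rule ccontr)
    assume "\<not> 0 \<le> l"
    then obtain e where e: "0 < e" "\<And>h. 0 < h \<Longrightarrow> h < e \<Longrightarrow> f' (x + h) < f' x"
      using DERIV_neg_dec_right[OF f''] by force
    obtain z where z: "x < z" "z < x + e/2" "f (x + e/2) - f x = (x + e/2 - x) * f' z"
      using MVT2[of x "x + e/2" f f'] f' e(1) by auto
    have "f' z < 0" using e(2)[of "z - x"] z f'_0 by auto
    then have "e * f' z < 0" using e(1) by (simp add: mult_pos_neg)
    then have "f (x + e/2) < f x" using z by simp
    then show False using min[of "x + e/2"] by simp
  qed
qed

lemma continuous_AE_ge_imp_ge:
  fixes f :: "real \<Rightarrow> real"
  assumes "continuous_on UNIV f" "AE x in lborel. c \<le> f x"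
  shows "c \<le> f x"
proof -
  have "closed {x. c \<le> f x}"
    using assms(1) by (intro closed_Collect_le continuous_intros)
  moreover have "AE x in lebesgue. x \<in> {x. c \<le> f x}"
    using AE_completion[OF assms(2)] by simp
  ultimately show ?thesis
    using mem_closed_if_AE_lebesgue by blast
qed

lemma abs_le_SUP_abs:
  fixes f :: "'a \<Rightarrow> real"
  assumes "bounded (range f)"
  shows "\<bar>f y\<bar> \<le> (SUP y. \<bar>f y\<bar>)"
proof (rule cSUP_upper)
  obtain M where "\<And>x. norm (f x) \<le> M"
    using assms unfolding bounded_iff by blast
  then show "bdd_above (range (\<lambda>y. \<bar>f y\<bar>))"
    by (intro bdd_aboveI2[of _ _ M]) simp
qed simp

section \<open>Uniform decay on a strip\<close>

lemma nn_integral_slab_eventually_less: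
  fixes G :: "real \<times> real \<Rightarrow> ennreal"
  assumes G: "G \<in> borel_measurable borel" and finite: "(\<integral>\<^sup>+w. G w \<partial>lborel) < \<infinity>" and "0 < e"
  shows "\<forall>\<^sub>F x in at_infinity. (\<integral>\<^sup>+w. G w * indicator (UNIV \<times> {x-1<..<x+1}) w \<partial>lborel) < e"
proof -
  define F where "F n w = G w * indicator {w. real n \<le> \<bar>snd w\<bar>} w" for n :: nat and w
  have F_meas: "F n \<in> borel_measurable lborel" for n
  proof -
    have "{w::real \<times> real. real n \<le> \<bar>snd w\<bar>} \<in> sets borel"
      by (intro borel_closed closed_Collect_le continuous_intros)
    then show ?thesis using G unfolding F_def by simp
  qed
  have "decseq F"
    by (intro decseq_SucI le_funI) (simp add: F_def indicator_def)
  moreover have "(\<integral>\<^sup>+w. F n w \<partial>lborel) < \<infinity>" for n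
    using finite by (elim le_less_trans[rotated]) (auto simp: F_def indicator_def intro!: nn_integral_mono)
  moreover have "(INF n. F n w) = 0" for w
  proof -
    obtain n :: nat where "\<bar>snd w\<bar> < real n" using reals_Archimedean2 by blast
    then have "F n w = 0" by (simp add: F_def)
    moreover have "(INF n. F n w) \<le> F n w"
      by (rule INF_lower) simp
    ultimately show ?thesis
      by simp
  qed
  ultimately have "(INF n. \<integral>\<^sup>+w. F n w \<partial>lborel) = 0"
    using nn_integral_monotone_convergence_INF_decseq[of F lborel] F_meas by simp
  then have "(INF n. \<integral>\<^sup>+w. F n w \<partial>lborel) < e"
    using \<open>0 < e\<close> by simp
  then obtain n where n: "(\<integral>\<^sup>+w. F n w \<partial>lborel) < e"
    by (auto simp: INF_less_iff)
  show ?thesis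
    unfolding eventually_at_infinity
  proof (intro exI[of _ "real n + 1"] allI impI)
    fix x :: real assume "real n + 1 \<le> norm x"
    then have "(\<integral>\<^sup>+w. G w * indicator (UNIV \<times> {x-1<..<x+1}) w \<partial>lborel) \<le> (\<integral>\<^sup>+w. F n w \<partial>lborel)"
      by (intro nn_integral_mono) (auto simp: F_def indicator_def)
    with n show "(\<integral>\<^sup>+w. G w * indicator (UNIV \<times> {x-1<..<x+1}) w \<partial>lborel) < e"
      by simp
  qed
qed

locale mixed_H1_strip =
  fixes T :: real and q qt qx qtx :: "real \<times> real \<Rightarrow> real"
  assumes T_pos: "0 < T"
    and deriv_t: "\<And>t x. t \<in> {0<..<T} \<Longrightarrow> ((\<lambda>s. q (s, x)) has_real_derivative qt (t, x)) (at t)"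
    and deriv_x: "\<And>t x. t \<in> {0<..<T} \<Longrightarrow> ((\<lambda>y. q (t, y)) has_real_derivative qx (t, x)) (at x)"
    and deriv_tx: "\<And>t x. t \<in> {0<..<T} \<Longrightarrow> ((\<lambda>s. qx (s, x)) has_real_derivative qtx (t, x)) (at t)"
    and continuous: "\<And>f. f \<in> {q, qt, qx, qtx} \<Longrightarrow> continuous_on ({0<..<T} \<times> UNIV) f"
    and square_integrable:
      "\<And>f. f \<in> {q, qt, qx, qtx} \<Longrightarrow> set_integrable lborel ({0<..<T} \<times> UNIV) (\<lambda>w. (f w)\<^sup>2)"
begin

definition energy :: "real \<times> real \<Rightarrow> real" where
  "energy w = (q w)\<^sup>2 + (qt w)\<^sup>2 + (qx w)\<^sup>2 + (qtx w)\<^sup>2"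

definition energy_on_strip :: "real \<times> real \<Rightarrow> ennreal" where
  "energy_on_strip w = ennreal (energy w) * indicator ({0<..<T} \<times> UNIV) w"

definition time_energy :: "real \<Rightarrow> ennreal" where
  "time_energy z = (\<integral>\<^sup>+r. energy_on_strip (r, z) \<partial>lborel)"

lemma energy_continuous: "continuous_on ({0<..<T} \<times> UNIV) energy"
  unfolding energy_def by (intro continuous_intros continuous) auto

lemma energy_on_strip_measurable: "energy_on_strip \<in> borel_measurable borel"
proof -
  have "(\<lambda>w. indicator ({0<..<T} \<times> UNIV) w *\<^sub>R energy w) \<in> borel_measurable borel"
    by (intro borel_measurable_continuous_on_indicator energy_continuous)
       (simp add: open_Times borel_open)
  then have "(\<lambda>w. ennreal (indicator ({0<..<T} \<times> UNIV) w *\<^sub>R energy w)) \<in> borel_measurable borel"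
    by simp
  moreover have "(\<lambda>w. ennreal (indicator ({0<..<T} \<times> UNIV) w *\<^sub>R energy w)) = energy_on_strip"
    by (auto simp: energy_on_strip_def indicator_def)
  ultimately show ?thesis
    by metis
qed

lemma energy_on_strip_finite: "(\<integral>\<^sup>+w. energy_on_strip w \<partial>lborel) < \<infinity>"
proof -
  have "set_integrable lborel ({0<..<T} \<times> UNIV) energy"
    unfolding energy_def by (intro set_integral_add(1) square_integrable) auto
  then have "(\<integral>\<^sup>+w. ennreal (norm (indicator ({0<..<T} \<times> UNIV) w *\<^sub>R energy w)) \<partial>lborel) < \<infinity>"
    unfolding set_integrable_def by (simp add: integrable_iff_bounded)
  moreover have "(\<lambda>w. ennreal (norm (indicator ({0<..<T} \<times> UNIV) w *\<^sub>R energy w))) = energy_on_strip"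
    by (auto simp: energy_on_strip_def energy_def indicator_def)
  ultimately show ?thesis
    by simp
qed

lemma nn_integral_time_energy:
  assumes "J \<in> sets borel"
  shows "(\<integral>\<^sup>+z. time_energy z * indicator J z \<partial>lborel)
           = (\<integral>\<^sup>+w. energy_on_strip w * indicator (UNIV \<times> J) w \<partial>lborel)"
proof -
  have "UNIV \<times> J \<in> sets borel"
    using assms by (intro borel_Times) auto
  then have meas: "(\<lambda>w. energy_on_strip w * indicator (UNIV \<times> J) w) \<in> borel_measurable (lborel \<Otimes>\<^sub>M lborel)"
    unfolding lborel_prod
    using energy_on_strip_measurable by (intro borel_measurable_times_ennreal borel_measurable_indicator) simp_all
  have "(\<integral>\<^sup>+w. energy_on_strip w * indicator (UNIV \<times> J) w \<partial>lborel)
      = (\<integral>\<^sup>+z. \<integral>\<^sup>+r. energy_on_strip (r, z) * indicator (UNIV \<times> J) (r, z) \<partial>lborel \<partial>lborel)"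
    using lborel_pair.nn_integral_snd[OF meas] by (simp add: lborel_prod)
  also have "\<dots> = (\<integral>\<^sup>+z. time_energy z * indicator J z \<partial>lborel)"
    unfolding time_energy_def by (intro nn_integral_cong) (auto simp: indicator_def)
  finally show ?thesis ..
qed

lemma time_energy_measurable: "time_energy \<in> borel_measurable borel"
proof -
  have "(\<lambda>w. energy_on_strip (snd w, fst w)) \<in> borel_measurable (lborel \<Otimes>\<^sub>M lborel)"
    unfolding lborel_prod
    by (rule measurable_compose[OF _ energy_on_strip_measurable])
       (auto intro!: borel_measurable_continuous_onI continuous_intros)
  then have "(\<lambda>z. \<integral>\<^sup>+r. energy_on_strip (r, z) \<partial>lborel) \<in> borel_measurable lborel"
    using lborel.borel_measurable_nn_integral_fst[of "\<lambda>w. energy_on_strip (snd w, fst w)" lborel]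
    by simp
  then show ?thesis
    unfolding time_energy_def[abs_def] by simp
qed

lemma abs_le_time_energy:
  fixes f f' :: "real \<Rightarrow> real"
  assumes t: "t \<in> {0<..<T}"
    and f': "\<And>r. r \<in> {0<..<T} \<Longrightarrow> (f has_real_derivative f' r) (at r)"
    and f_le: "\<And>r. r \<in> {0<..<T} \<Longrightarrow> \<bar>f r\<bar> \<le> energy (r, z)"
    and f'_le: "\<And>r. r \<in> {0<..<T} \<Longrightarrow> \<bar>f' r\<bar> \<le> energy (r, z)"
  shows "ennreal \<bar>f t\<bar> \<le> ennreal (1 / T + 1) * time_energy z"
proof -
  have E: "time_energy z = (\<integral>\<^sup>+r. ennreal (energy (r, z)) * indicator {0<..<T} r \<partial>lborel)"
    unfolding time_energy_def energy_on_strip_def by (intro nn_integral_cong) (simp add: indicator_def)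
  have cont: "continuous_on {0<..<T} (\<lambda>r. energy (r, z))"
    by (rule continuous_on_compose2[OF energy_continuous]) (auto intro!: continuous_intros)
  have f_int: "(\<integral>\<^sup>+r. ennreal \<bar>f r\<bar> * indicator {0<..<T} r \<partial>lborel) \<le> time_energy z"
    unfolding E using f_le by (intro nn_integral_mono) (auto simp: indicator_def intro!: ennreal_leI)
  have "ennreal \<bar>f t\<bar> \<le> (\<integral>\<^sup>+r. ennreal \<bar>f r\<bar> * indicator {0<..<T} r \<partial>lborel) / ennreal (T - 0)
      + (\<integral>\<^sup>+r. ennreal (energy (r, z)) * indicator {0<..<T} r \<partial>lborel)"
    by (rule abs_le_mean_plus_nn_integral_of_deriv_bound[OF t f' cont f'_le])
  also have "\<dots> \<le> time_energy z / ennreal T + time_energy z"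
    using f_int E by (auto intro: add_right_mono divide_right_mono_ennreal)
  also have "\<dots> = ennreal (1 / T + 1) * time_energy z"
    using T_pos by (simp add: divide_ennreal_def inverse_ennreal inverse_eq_divide distrib_right mult.commute)
  finally show ?thesis .
qed

lemma sq_le_time_energy:
  assumes t: "t \<in> {0<..<T}"
  shows "ennreal ((q (t, z))\<^sup>2) \<le> ennreal (1 / T + 1) * time_energy z"
proof -
  have "ennreal \<bar>(q (t, z))\<^sup>2\<bar> \<le> ennreal (1 / T + 1) * time_energy z"
  proof (rule abs_le_time_energy[OF t])
    fix r assume r: "r \<in> {0<..<T}"
    show "((\<lambda>r. (q (r, z))\<^sup>2) has_real_derivative 2 * q (r, z) * qt (r, z)) (at r)"
      using deriv_t[OF r] by (auto intro!: derivative_eq_intros)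
    show "\<bar>(q (r, z))\<^sup>2\<bar> \<le> energy (r, z)"
      by (simp add: energy_def)
    show "\<bar>2 * q (r, z) * qt (r, z)\<bar> \<le> energy (r, z)"
      using abs_two_mult_le_sum_squares[of "q (r, z)" "qt (r, z)"]
      by (simp add: energy_def add_increasing2)
  qed
  then show ?thesis
    by simp
qed

lemma cross_term_le_time_energy:
  assumes t: "t \<in> {0<..<T}"
  shows "ennreal \<bar>2 * q (t, z) * qx (t, z)\<bar> \<le> ennreal (1 / T + 1) * time_energy z"
proof (rule abs_le_time_energy[OF t])
  fix r assume r: "r \<in> {0<..<T}"
  show "((\<lambda>r. 2 * q (r, z) * qx (r, z)) has_real_derivative
          2 * qt (r, z) * qx (r, z) + 2 * q (r, z) * qtx (r, z)) (at r)"
    using deriv_t[OF r] deriv_tx[OF r] by (auto intro!: derivative_eq_intros)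
  show "\<bar>2 * q (r, z) * qx (r, z)\<bar> \<le> energy (r, z)"
    using abs_two_mult_le_sum_squares[of "q (r, z)" "qx (r, z)"]
    unfolding energy_def by (smt (verit) zero_le_power2)
  show "\<bar>2 * qt (r, z) * qx (r, z) + 2 * q (r, z) * qtx (r, z)\<bar> \<le> energy (r, z)"
    using abs_two_mult_le_sum_squares[of "qt (r, z)" "qx (r, z)"]
      abs_two_mult_le_sum_squares[of "q (r, z)" "qtx (r, z)"]
    unfolding energy_def by linarith
qed

lemma sq_le_slab_energy:
  assumes t: "t \<in> {0<..<T}"
  shows "ennreal ((q (t, x))\<^sup>2)
           \<le> ennreal (3 / 2 * (1 / T + 1)) * (\<integral>\<^sup>+z. time_energy z * indicator {x-1<..<x+1} z \<partial>lborel)"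
proof -
  let ?J = "{x-1<..<x+1}"
  define C where "C = ennreal (1 / T + 1)"
  define S where "S = (\<integral>\<^sup>+z. time_energy z * indicator ?J z \<partial>lborel)"
  have C_S: "(\<integral>\<^sup>+z. C * time_energy z * indicator ?J z \<partial>lborel) = C * S"
    unfolding S_def mult.assoc using time_energy_measurable by (intro nn_integral_cmult) simp
  have "continuous_on UNIV (\<lambda>z. \<bar>2 * q (t, z) * qx (t, z)\<bar>)"
    using t by (intro continuous_intros continuous_on_compose2[OF continuous]) auto
  then have cont: "continuous_on ?J (\<lambda>z. \<bar>2 * q (t, z) * qx (t, z)\<bar>)"
    by (rule continuous_on_subset) simp
  have "ennreal \<bar>(q (t, x))\<^sup>2\<bar> \<le> (\<integral>\<^sup>+z. ennreal \<bar>(q (t, z))\<^sup>2\<bar> * indicator ?J z \<partial>lborel) / ennreal (x + 1 - (x - 1))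
      + (\<integral>\<^sup>+z. ennreal \<bar>2 * q (t, z) * qx (t, z)\<bar> * indicator ?J z \<partial>lborel)"
    using deriv_x[OF t]
    by (intro abs_le_mean_plus_nn_integral_of_deriv_bound[where f'="\<lambda>z. 2 * q (t, z) * qx (t, z)"])
       (auto intro!: derivative_eq_intros cont)
  also have "\<dots> \<le> C * S / ennreal 2 + C * S"
  proof -
    have "(\<integral>\<^sup>+z. ennreal \<bar>(q (t, z))\<^sup>2\<bar> * indicator ?J z \<partial>lborel)
        \<le> (\<integral>\<^sup>+z. C * time_energy z * indicator ?J z \<partial>lborel)"
      by (intro nn_integral_mono) (auto simp: indicator_def C_def sq_le_time_energy[OF t])
    moreover have "(\<integral>\<^sup>+z. ennreal \<bar>2 * q (t, z) * qx (t, z)\<bar> * indicator ?J z \<partial>lborel)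
        \<le> (\<integral>\<^sup>+z. C * time_energy z * indicator ?J z \<partial>lborel)"
      by (intro nn_integral_mono) (auto simp: indicator_def C_def cross_term_le_time_energy[OF t])
    ultimately show ?thesis
      unfolding C_S by (auto intro!: add_mono divide_right_mono_ennreal)
  qed
  also have "\<dots> = ennreal (1 / 2) * (C * S) + ennreal 1 * (C * S)"
    by (simp add: divide_ennreal_def inverse_ennreal inverse_eq_divide mult.commute)
  also have "\<dots> = ennreal (3 / 2) * (C * S)"
    by (simp only: distrib_right[symmetric] ennreal_plus[symmetric]) simp
  also have "\<dots> = ennreal (3 / 2 * (1 / T + 1)) * S"
    unfolding C_def using T_pos by (subst ennreal_mult) (auto simp: mult.assoc)
  finally show ?thesis
    by (simp add: S_def)
qed

lemma vanishes_at_infinity: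
  assumes "0 < \<eta>"
  shows "\<exists>R. \<forall>t\<in>{0<..<T}. \<forall>x. R \<le> \<bar>x\<bar> \<longrightarrow> \<bar>q (t, x)\<bar> < \<eta>"
proof -
  define C where "C = 3 / 2 * (1 / T + 1)"
  have "0 < C"
    unfolding C_def using T_pos by (intro mult_pos_pos add_pos_pos) auto
  have "\<forall>\<^sub>F x in at_infinity.
      (\<integral>\<^sup>+w. energy_on_strip w * indicator (UNIV \<times> {x-1<..<x+1}) w \<partial>lborel) < ennreal (\<eta>\<^sup>2 / C)"
    using \<open>0 < \<eta>\<close> \<open>0 < C\<close>
    by (intro nn_integral_slab_eventually_less energy_on_strip_measurable energy_on_strip_finite) simp
  then obtain R where R: "\<And>x. R \<le> norm x \<Longrightarrow>
      (\<integral>\<^sup>+w. energy_on_strip w * indicator (UNIV \<times> {x-1<..<x+1}) w \<partial>lborel) < ennreal (\<eta>\<^sup>2 / C)"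
    unfolding eventually_at_infinity by blast
  show ?thesis
  proof (intro exI[of _ R] ballI allI impI)
    fix t x assume t: "t \<in> {0<..<T}" and x: "R \<le> \<bar>x\<bar>"
    have "ennreal ((q (t, x))\<^sup>2)
        \<le> ennreal C * (\<integral>\<^sup>+w. energy_on_strip w * indicator (UNIV \<times> {x-1<..<x+1}) w \<partial>lborel)"
      using sq_le_slab_energy[OF t, of x] by (simp add: C_def nn_integral_time_energy)
    also have "\<dots> < ennreal C * ennreal (\<eta>\<^sup>2 / C)"
      using R[of x] x \<open>0 < C\<close> by (intro ennreal_mult_strict_left_mono) auto
    also have "\<dots> = ennreal (\<eta>\<^sup>2)"
      using \<open>0 < C\<close> by (simp flip: ennreal_mult)
    finally have "\<bar>q (t, x)\<bar>\<^sup>2 < \<eta>\<^sup>2"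
      by (simp add: ennreal_less_iff)
    then show "\<bar>q (t, x)\<bar> < \<eta>"
      using power2_less_imp_less[of "\<bar>q (t, x)\<bar>" \<eta>] \<open>0 < \<eta>\<close> by simp
  qed
qed

end

section \<open>A comparison principle\<close>

lemma first_zero_in_time:
  fixes u :: "real \<times> real \<Rightarrow> real"
  assumes cont: "continuous_on ({0..\<tau>} \<times> UNIV) u"
    and init: "\<And>x. 0 < u (0, x)"
    and far: "\<And>t x. t \<in> {0..\<tau>} \<Longrightarrow> R \<le> \<bar>x\<bar> \<Longrightarrow> 0 < u (t, x)"
    and nonpos: "t0 \<in> {0..\<tau>}" "u (t0, x0) \<le> 0"
  obtains ts xs where "ts \<in> {0<..\<tau>}" "u (ts, xs) = 0" "\<And>y. 0 \<le> u (ts, y)"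
    "\<And>s y. s \<in> {0..<ts} \<Longrightarrow> 0 < u (s, y)"
proof -
  define K where "K = ({0..\<tau>} \<times> {-R..R}) \<inter> u -` {..0}"
  have "closed K"
    unfolding K_def
    by (rule continuous_closed_preimage[OF continuous_on_subset[OF cont]]) (auto simp: closed_Times)
  moreover have "bounded K"
    unfolding K_def by (rule bounded_subset[of "{0..\<tau>} \<times> {-R..R}"]) (auto intro: bounded_Times)
  ultimately have "compact K"
    by (simp add: compact_eq_bounded_closed)
  moreover have "(t0, x0) \<in> K"
    using far[OF nonpos(1), of x0] nonpos by (force simp: K_def)
  ultimately obtain p where p: "p \<in> K" "\<And>p'. p' \<in> K \<Longrightarrow> fst p \<le> fst p'"
    using continuous_attains_inf[of K fst] continuous_on_fst[OF continuous_on_id] by fastforce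
  obtain ts xs where p_eq: "p = (ts, xs)" by fastforce
  have ts: "ts \<in> {0..\<tau>}" "u (ts, xs) \<le> 0"
    using p(1) by (auto simp: K_def p_eq)
  have before: "0 < u (s, y)" if s: "s \<in> {0..<ts}" for s y
  proof (rule ccontr)
    assume "\<not> 0 < u (s, y)"
    moreover have "s \<in> {0..\<tau>}" using s ts by auto
    ultimately have "(s, y) \<in> K"
      using far[of s y] by (force simp: K_def)
    then show False
      using p(2) s by (fastforce simp: p_eq)
  qed
  have "ts \<noteq> 0"
    using init[of xs] ts by auto
  then have "0 < ts" using ts by simp
  have "0 \<le> u (ts, y)" for y
  proof (rule ge_at_right_endpoint_if_continuous_on[OF _ \<open>0 < ts\<close>])
    show "continuous_on {0..ts} (\<lambda>s. u (s, y))"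
      using ts by (intro continuous_on_compose2[OF cont] continuous_intros) auto
  qed (meson atLeastLessThan_iff before less_imp_le)
  with ts \<open>0 < ts\<close> before show thesis
    by (intro that[of ts xs]) (auto intro: antisym)
qed

lemma barrier_below:
  fixes q qt qx qxx :: "real \<times> real \<Rightarrow> real" and B B' :: "real \<Rightarrow> real"
    and \<Phi> :: "real \<Rightarrow> real \<Rightarrow> real"
  assumes cont: "continuous_on ({0..\<tau>} \<times> UNIV) q"
    and deriv_t: "\<And>t x. t \<in> {0<..\<tau>} \<Longrightarrow> ((\<lambda>s. q (s, x)) has_real_derivative qt (t, x)) (at t)"
    and deriv_x: "\<And>t x. t \<in> {0<..\<tau>} \<Longrightarrow> ((\<lambda>y. q (t, y)) has_real_derivative qx (t, x)) (at x)"
    and deriv_xx: "\<And>t x. t \<in> {0<..\<tau>} \<Longrightarrow> ((\<lambda>y. qx (t, y)) has_real_derivative qxx (t, x)) (at x)"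
    and vanish: "\<And>\<eta>. 0 < \<eta> \<Longrightarrow> \<exists>R. \<forall>t\<in>{0<..\<tau>}. \<forall>x. R \<le> \<bar>x\<bar> \<longrightarrow> - \<eta> < q (t, x)"
    and supersolution: "\<And>t x. t \<in> {0<..\<tau>} \<Longrightarrow> q (t, x) < 0 \<Longrightarrow> qx (t, x) = 0 \<Longrightarrow>
      0 \<le> qxx (t, x) \<Longrightarrow> \<Phi> t (q (t, x)) \<le> qt (t, x)"
    and B': "\<And>t. t \<in> {0..\<tau>} \<Longrightarrow> (B has_real_derivative B' t) (at t)"
    and B_neg: "\<And>t. t \<in> {0..\<tau>} \<Longrightarrow> B t < 0"
    and B'_less: "\<And>t. t \<in> {0<..\<tau>} \<Longrightarrow> B' t < \<Phi> t (B t)"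
    and init: "\<And>x. B 0 < q (0, x)"
    and t: "t \<in> {0..\<tau>}"
  shows "B t < q (t, x)"
proof (rule ccontr)
  assume "\<not> B t < q (t, x)"
  define u where "u p = q p - B (fst p)" for p
  have B_cont: "continuous_on {0..\<tau>} B"
    using B' by (meson DERIV_isCont continuous_at_imp_continuous_on)
  obtain tm where tm: "tm \<in> {0..\<tau>}" "\<And>s. s \<in> {0..\<tau>} \<Longrightarrow> B s \<le> B tm"
    using continuous_attains_sup[OF compact_Icc _ B_cont] t by fastforce
  obtain R where R: "\<forall>s\<in>{0<..\<tau>}. \<forall>y. R \<le> \<bar>y\<bar> \<longrightarrow> B tm < q (s, y)"
    using vanish[of "- B tm"] B_neg[OF tm(1)] by auto
  have u_cont: "continuous_on ({0..\<tau>} \<times> UNIV) u"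
    unfolding u_def
    by (intro continuous_intros cont continuous_on_compose2[OF B_cont] continuous_on_fst) auto
  have far: "0 < u (s, y)" if s: "s \<in> {0..\<tau>}" and y: "R \<le> \<bar>y\<bar>" for s y
  proof (cases "s = 0")
    case True
    then show ?thesis using init[of y] by (simp add: u_def)
  next
    case False
    then have "B tm < q (s, y)" using R s y by auto
    then show ?thesis using tm(2)[OF s] by (simp add: u_def)
  qed
  have "0 < u (0, y)" for y
    using init by (simp add: u_def)
  moreover have "u (t, x) \<le> 0"
    using \<open>\<not> B t < q (t, x)\<close> by (simp add: u_def)
  ultimately obtain ts xs where ts: "ts \<in> {0<..\<tau>}" "u (ts, xs) = 0" "\<And>y. 0 \<le> u (ts, y)"
    and before: "\<And>s y. s \<in> {0..<ts} \<Longrightarrow> 0 < u (s, y)"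
    using first_zero_in_time[OF u_cont _ far t] by blast
  have touch: "q (ts, xs) = B ts" and min: "\<And>y. q (ts, xs) \<le> q (ts, y)"
    using ts(2,3) by (auto simp: u_def)
  have "qx (ts, xs) = 0" "0 \<le> qxx (ts, xs)"
    using global_min_deriv_conditions[OF deriv_x[OF ts(1)] deriv_xx[OF ts(1)] min] by auto
  moreover have "q (ts, xs) < 0"
    using touch B_neg ts(1) by simp
  ultimately have "B' ts < qt (ts, xs)"
    using supersolution[OF ts(1)] B'_less[OF ts(1)] touch by fastforce
  moreover have "((\<lambda>s. u (s, xs)) has_real_derivative qt (ts, xs) - B' ts) (at ts)"
    unfolding u_def using deriv_t[OF ts(1)] B'[of ts] ts(1) by (auto intro!: derivative_eq_intros)
  ultimately obtain d where d: "0 < d" "\<And>h. 0 < h \<Longrightarrow> h < d \<Longrightarrow> u (ts - h, xs) < u (ts, xs)"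
    using DERIV_pos_inc_left[of "\<lambda>s. u (s, xs)"] by force
  define h where "h = min (d / 2) ts"
  have "0 < h" "h < d" "ts - h \<in> {0..<ts}"
    using d(1) ts(1) by (auto simp: h_def)
  then show False
    using d(2)[of h] before[of "ts - h" xs] ts(2) by simp
qed

text \<open>The barrier is \<open>-(c/a)(e\<^sup>a\<^sup>t - 1)\<close>, which solves \<open>B' = -c + a B\<close>, pushed down by
  \<open>\<delta> (1 + t) e\<^sup>a\<^sup>t\<close> to make the differential inequality strict also when \<open>a = 0\<close>;
  then \<open>\<delta> \<rightarrow> 0\<close>, and \<open>t = T\<close> is reached by continuity.
  As \<open>c / 0 = 0\<close>, the bound needs \<open>c = 0\<close> when \<open>a = 0\<close>.\<close>
lemma exponential_lower_bound:
  fixes q qt qx qxx :: "real \<times> real \<Rightarrow> real" and c a :: real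
  assumes cont: "continuous_on ({0..T} \<times> UNIV) q"
    and deriv_t: "\<And>t x. t \<in> {0<..<T} \<Longrightarrow> ((\<lambda>s. q (s, x)) has_real_derivative qt (t, x)) (at t)"
    and deriv_x: "\<And>t x. t \<in> {0<..<T} \<Longrightarrow> ((\<lambda>y. q (t, y)) has_real_derivative qx (t, x)) (at x)"
    and deriv_xx: "\<And>t x. t \<in> {0<..<T} \<Longrightarrow> ((\<lambda>y. qx (t, y)) has_real_derivative qxx (t, x)) (at x)"
    and vanish: "\<And>\<eta>. 0 < \<eta> \<Longrightarrow> \<exists>R. \<forall>t\<in>{0<..<T}. \<forall>x. R \<le> \<bar>x\<bar> \<longrightarrow> \<bar>q (t, x)\<bar> < \<eta>"
    and supersolution: "\<And>t x. t \<in> {0<..<T} \<Longrightarrow> q (t, x) < 0 \<Longrightarrow> qx (t, x) = 0 \<Longrightarrow>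
      0 \<le> qxx (t, x) \<Longrightarrow> - c + a * q (t, x) \<le> qt (t, x)"
    and init: "\<And>x. 0 \<le> q (0, x)"
    and "0 \<le> c" "0 \<le> a" "a = 0 \<Longrightarrow> c = 0"
    and t: "t \<in> {0..T}"
  shows "- (c / a) * (exp (a * t) - 1) \<le> q (t, x)"
proof -
  define k where "k = c / a"
  have "0 \<le> k" using \<open>0 \<le> c\<close> \<open>0 \<le> a\<close> by (simp add: k_def)
  have c_eq: "c = k * a"
    using \<open>a = 0 \<Longrightarrow> c = 0\<close> by (cases "a = 0") (simp_all add: k_def)
  define B0 where "B0 s = - k * (exp (a * s) - 1)" for s
  have perturbed: "B0 s - \<delta> * (1 + s) * exp (a * s) < q (s, y)"
    if \<delta>: "0 < \<delta>" and s: "s \<in> {0..<T}" for \<delta> s y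
  proof -
    define B where "B r = B0 r - \<delta> * (1 + r) * exp (a * r)" for r
    have "B s < q (s, y)"
    proof (rule barrier_below[where qt = qt and qx = qx and qxx = qxx and \<Phi> = "\<lambda>_ v. - c + a * v"])
      show "continuous_on ({0..s} \<times> UNIV) q"
        by (rule continuous_on_subset[OF cont]) (use s in auto)
    next
      fix r
      show "(B has_real_derivative - k * a * exp (a * r) - \<delta> * exp (a * r)
              - \<delta> * (1 + r) * a * exp (a * r)) (at r)"
        unfolding B_def B0_def by (auto intro!: derivative_eq_intros simp: algebra_simps)
      show "- k * a * exp (a * r) - \<delta> * exp (a * r) - \<delta> * (1 + r) * a * exp (a * r)
          < - c + a * B r"
        unfolding B_def B0_def c_eq using \<delta> by (simp add: algebra_simps)
    next
      fix r assume r: "r \<in> {0..s}"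
      have "0 \<le> k * (exp (a * r) - 1)"
        using \<open>0 \<le> k\<close> \<open>0 \<le> a\<close> r by simp
      moreover have "0 < \<delta> * (1 + r) * exp (a * r)"
        using \<delta> r by simp
      ultimately show "B r < 0"
        unfolding B_def B0_def by simp
    next
      fix \<eta> :: real assume "0 < \<eta>"
      then obtain R where R: "\<forall>t\<in>{0<..<T}. \<forall>x. R \<le> \<bar>x\<bar> \<longrightarrow> \<bar>q (t, x)\<bar> < \<eta>"
        using vanish by blast
      show "\<exists>R. \<forall>t\<in>{0<..s}. \<forall>x. R \<le> \<bar>x\<bar> \<longrightarrow> - \<eta> < q (t, x)"
      proof (intro exI[of _ R] ballI allI impI)
        fix t x assume "t \<in> {0<..s}" "R \<le> \<bar>x\<bar>"
        then have "\<bar>q (t, x)\<bar> < \<eta>" using R s by auto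
        then show "- \<eta> < q (t, x)" by linarith
      qed
    next
      fix x
      show "B 0 < q (0, x)"
        using init[of x] \<delta> by (simp add: B_def B0_def)
    next
      fix t x assume "t \<in> {0<..s}" "q (t, x) < 0" "qx (t, x) = 0" "0 \<le> qxx (t, x)"
      then show "- c + a * q (t, x) \<le> qt (t, x)"
        using s by (intro supersolution) auto
    qed (use s in \<open>auto intro!: deriv_t deriv_x deriv_xx\<close>)
    then show ?thesis
      by (simp add: B_def)
  qed
  have before_T: "B0 s \<le> q (s, y)" if s: "s \<in> {0..<T}" for s y
  proof (rule field_le_epsilon)
    fix e :: real assume "0 < e"
    have "0 < (1 + s) * exp (a * s)" using s by simp
    then show "B0 s \<le> q (s, y) + e"
      using perturbed[of "e / ((1 + s) * exp (a * s))" s y] \<open>0 < e\<close> s by simp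
  qed
  have "B0 t \<le> q (t, x)"
  proof (cases "t < T")
    case True
    then show ?thesis using before_T t by simp
  next
    case False
    then have "t = T" using t by simp
    show ?thesis
    proof (cases "T = 0")
      case True
      then show ?thesis using init[of x] \<open>t = T\<close> by (simp add: B0_def)
    next
      case False
      then have "0 < T" using t \<open>t = T\<close> by simp
      have "0 \<le> q (T, x) - B0 T"
      proof (rule ge_at_right_endpoint_if_continuous_on[OF _ \<open>0 < T\<close>])
        show "continuous_on {0..T} (\<lambda>s. q (s, x) - B0 s)"
          unfolding B0_def by (intro continuous_intros continuous_on_compose2[OF cont]) auto
      qed (use before_T in auto)
      then show ?thesis using \<open>t = T\<close> by simp
    qed
  qed
  then show ?thesis
    by (simp add: B0_def k_def)
qed

section \<open>The viscous equation\<close>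

lemma flux_has_derivative_at_critical_point:
  fixes V g p :: "real \<Rightarrow> real"
  assumes V': "(V has_real_derivative V') (at ((g x - p x) / \<epsilon>))"
    and g': "(g has_real_derivative g') (at x)"
    and p': "(p has_real_derivative 0) (at x)"
  shows "((\<lambda>y. V ((g y - p y) / \<epsilon>) * p y) has_real_derivative V' / \<epsilon> * g' * p x) (at x)"
proof -
  have "((\<lambda>y. (g y - p y) / \<epsilon>) has_real_derivative (g' - 0) / \<epsilon>) (at x)"
    by (intro DERIV_cdivide DERIV_diff g' p')
  from DERIV_mult[OF DERIV_chain2[OF V' this] p'] show ?thesis
    by simp
qed

lemma time_derivative_lower_bound_at_negative_minimum:
  fixes V g p :: "real \<Rightarrow> real"
  assumes flux: "((\<lambda>y. V ((g y - p y) / \<epsilon>) * p y) has_real_derivative \<nu> * (pxx - g'') - pt) (at x)"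
    and V': "(V has_real_derivative V') (at ((g x - p x) / \<epsilon>))"
    and g': "(g has_real_derivative g') (at x)"
    and p': "(p has_real_derivative 0) (at x)"
    and "p x < 0" "0 \<le> pxx" "0 \<le> \<nu>"
    and "\<bar>V' / \<epsilon>\<bar> \<le> K" "\<bar>g'\<bar> \<le> S1" "\<bar>g''\<bar> \<le> S2"
  shows "- (\<nu> * S2) + S1 * K * p x \<le> pt"
proof -
  have pt: "pt = \<nu> * pxx - \<nu> * g'' - V' / \<epsilon> * g' * p x"
    using DERIV_unique[OF flux flux_has_derivative_at_critical_point[OF V' g' p']]
    by (simp add: algebra_simps)
  have "0 \<le> K"
    using assms(8) abs_ge_zero order_trans by blast
  then have "\<bar>V' / \<epsilon> * g'\<bar> \<le> K * S1"
    unfolding abs_mult[of "V' / \<epsilon>"] using assms(8,9) by (intro mult_mono) auto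
  then have "\<bar>V' / \<epsilon> * g'\<bar> * \<bar>p x\<bar> \<le> K * S1 * \<bar>p x\<bar>"
    by (rule mult_right_mono) simp
  then have "V' / \<epsilon> * g' * p x \<le> K * S1 * \<bar>p x\<bar>"
    by (rule order_trans[rotated]) (metis abs_ge_self abs_mult)
  then have "V' / \<epsilon> * g' * p x \<le> - (S1 * K * p x)"
    using \<open>p x < 0\<close> by (simp add: mult.commute)
  moreover have "\<nu> * g'' \<le> \<nu> * S2"
    using assms(7,10) by (intro mult_left_mono) auto
  moreover have "0 \<le> \<nu> * pxx"
    using assms(6,7) by simp
  ultimately show ?thesis
    unfolding pt by linarith
qed

lemma admissible_VD:
  assumes "admissible_V Vd"
  shows "\<forall>k. \<forall>x\<ge>0. (Vd k has_real_derivative Vd (Suc k) x) (at x within {0..})"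
    and "\<forall>k\<ge>1. \<forall>x\<ge>0. (-1) ^ (k + 1) * Vd k x > 0"
    and "\<forall>k. \<exists>B. \<forall>x\<ge>0. \<bar>Vd k x\<bar> \<le> B"
proof -
  note V = assms[unfolded admissible_V_def]
  from V show "\<forall>k. \<forall>x\<ge>0. (Vd k has_real_derivative Vd (Suc k) x) (at x within {0..})"
    by (elim conjE)
  from V show "\<forall>k\<ge>1. \<forall>x\<ge>0. (-1) ^ (k + 1) * Vd k x > 0"
    by (elim conjE)
  from V show "\<forall>k. \<exists>B. \<forall>x\<ge>0. \<bar>Vd k x\<bar> \<le> B"
    by (elim conjE)
qed

lemma admissible_V_has_derivative:
  assumes "admissible_V Vd" "0 < u"
  shows "(Vd 0 has_real_derivative Vd 1 u) (at u)"
proof -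
  have "(Vd 0 has_real_derivative Vd 1 u) (at u within {0..})"
    using admissible_VD(1)[OF assms(1)] assms(2) by simp
  moreover have "at u within {0..} = at u"
    using assms(2) by (intro at_within_interior) simp
  ultimately show ?thesis
    by simp
qed

lemma admissible_V_slope_le_SUP:
  assumes "admissible_V Vd" "0 < \<epsilon>" "0 \<le> c" "c \<le> y"
  shows "\<bar>Vd 1 (y / \<epsilon>) / \<epsilon>\<bar> \<le> (SUP y\<in>{c..}. \<bar>Vd 1 (y / \<epsilon>) / \<epsilon>\<bar>)"
proof (rule cSUP_upper)
  obtain M where M: "\<And>x. 0 \<le> x \<Longrightarrow> \<bar>Vd 1 x\<bar> \<le> M"
    using admissible_VD(3)[OF assms(1)] by blast
  show "bdd_above ((\<lambda>y. \<bar>Vd 1 (y / \<epsilon>) / \<epsilon>\<bar>) ` {c..})"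
  proof (rule bdd_aboveI2)
    fix y assume "y \<in> {c..}"
    then have "\<bar>Vd 1 (y / \<epsilon>)\<bar> \<le> M"
      using assms(2,3) by (intro M) simp
    then show "\<bar>Vd 1 (y / \<epsilon>) / \<epsilon>\<bar> \<le> M / \<epsilon>"
      using assms(2) by (simp add: divide_right_mono)
  qed
qed (use assms(4) in simp)

lemma admissible_V_SUP_slope_pos:
  assumes "admissible_V Vd" "0 < \<epsilon>" "0 \<le> c"
  shows "0 < (SUP y\<in>{c..}. \<bar>Vd 1 (y / \<epsilon>) / \<epsilon>\<bar>)"
proof -
  have "0 < Vd 1 (c / \<epsilon>)"
    using admissible_VD(2)[OF assms(1), rule_format, of 1 "c / \<epsilon>"] assms(2,3) by simp
  then have "0 < \<bar>Vd 1 (c / \<epsilon>) / \<epsilon>\<bar>"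
    using assms(2) by simp
  also have "\<dots> \<le> (SUP y\<in>{c..}. \<bar>Vd 1 (y / \<epsilon>) / \<epsilon>\<bar>)"
    using admissible_V_slope_le_SUP[OF assms] by simp
  finally show ?thesis .
qed

lemma admissible_oD:
  assumes "admissible_o od"
  shows "\<forall>k<5. \<forall>x. (od k has_real_derivative od (Suc k) x) (at x)"
    and "\<forall>k\<le>5. bounded (range (od k))"
proof -
  note o = assms[unfolded admissible_o_def]
  from o show "\<forall>k<5. \<forall>x. (od k has_real_derivative od (Suc k) x) (at x)"
    by (elim conjE)
  from o show "\<forall>k\<le>5. bounded (range (od k))"
    by (elim conjE)
qed

lemma admissible_o_has_derivative:
  "admissible_o od \<Longrightarrow> k < 5 \<Longrightarrow> (od k has_real_derivative od (Suc k) x) (at x)"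
  using admissible_oD(1) by blast

lemma admissible_o_abs_le_SUP:
  assumes "admissible_o od" "k \<le> 5"
  shows "\<bar>od k y\<bar> \<le> (SUP y. \<bar>od k y\<bar>)"
proof (rule abs_le_SUP_abs)
  show "bounded (range (od k))"
    using admissible_oD(2)[OF assms(1)] assms(2) by blast
qed

lemma admissible_o_SUP_second_eq_0:
  assumes "admissible_o od" "(SUP y. \<bar>od 1 y\<bar>) = 0"
  shows "(SUP y. \<bar>od 2 y\<bar>) = 0"
proof -
  have "od 1 = (\<lambda>_. 0)"
    using admissible_o_abs_le_SUP[OF assms(1), of 1] assms(2) by (simp add: fun_eq_iff)
  moreover have "(od 1 has_real_derivative od 2 y) (at y)" for y
    using admissible_o_has_derivative[OF assms(1), of 1] by (simp add: numeral_2_eq_2)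
  ultimately have "od 2 y = 0" for y
    using DERIV_unique[OF _ DERIV_const] by fastforce
  then show ?thesis
    by simp
qed

lemma admissible_o_Inf_range_le:
  assumes "admissible_o od"
  shows "Inf (range (od 0)) \<le> od 0 x"
proof -
  have "bdd_below (range (od 0))"
    using admissible_oD(2)[OF assms] by (simp add: bounded_imp_bdd_below)
  then show ?thesis
    by (simp add: cInf_lower)
qed

lemma admissible_o_Inf_range_nonneg:
  assumes "admissible_o od" "\<forall>x. 0 \<le> q0 x" "\<exists>\<delta>>0. AE x in lborel. od 0 x - q0 x \<ge> \<delta>"
  shows "0 \<le> Inf (range (od 0))"
proof (rule cInf_greatest)
  fix v assume "v \<in> range (od 0)"
  then obtain x where "v = od 0 x" by blast
  have "continuous_on UNIV (od 0)"
    using admissible_o_has_derivative[OF assms(1), of 0]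
    by (meson DERIV_isCont continuous_at_imp_continuous_on zero_less_numeral)
  moreover obtain \<delta> where "0 < \<delta>" and "AE x in lborel. od 0 x - q0 x \<ge> \<delta>"
    using assms(3) by blast
  then have "AE x in lborel. 0 \<le> od 0 x"
  proof (elim eventually_mono)
    fix x assume "od 0 x - q0 x \<ge> \<delta>"
    then show "0 \<le> od 0 x"
      using assms(2) \<open>0 < \<delta>\<close> by (smt (verit))
  qed
  ultimately show "0 \<le> v"
    unfolding \<open>v = od 0 x\<close> by (rule continuous_AE_ge_imp_ge)
qed simp

lemma mollify_nonneg:
  assumes "0 < \<nu>" "\<And>y. 0 \<le> f y"
  shows "0 \<le> mollify \<nu> f x"
proof -
  have "0 \<le> std_mollifier y" for y
    unfolding std_mollifier_def std_mollifier_raw_def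
    by (intro divide_nonneg_nonneg integral_nonneg_AE AE_I2) auto
  then show ?thesis
    unfolding mollify_def mollifier_def using assms
    by (intro integral_nonneg_AE AE_I2 mult_nonneg_nonneg divide_nonneg_nonneg) auto
qed

lemma viscous_solution_regularity:
  assumes "viscous_solution Vd od \<epsilon> \<nu> T q_init q" "0 < T"
  obtains qt qx qtx qxx where "mixed_H1_strip T q qt qx qtx"
    and "\<And>t x. t \<in> {0<..<T} \<Longrightarrow> ((\<lambda>y. qx (t, y)) has_real_derivative qxx (t, x)) (at x)"
    and "continuous_on ({0..T} \<times> UNIV) q"
    and "\<And>x. q (0, x) = q_init x"
    and "\<And>t x. t \<in> {0<..<T} \<Longrightarrow> ((\<lambda>y. Vd 0 ((od 0 y - q (t, y)) / \<epsilon>) * q (t, y))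
           has_real_derivative \<nu> * (qxx (t, x) - od 2 x) - qt (t, x)) (at x)"
proof -
  obtain D :: "nat \<Rightarrow> nat \<Rightarrow> real \<times> real \<Rightarrow> real" where
    D00: "D 0 0 = q" and
    D_deriv: "\<forall>i j. i + j < 5 \<longrightarrow> (\<forall>t\<in>{0<..<T}. \<forall>x.
        ((\<lambda>s. D i j (s, x)) has_real_derivative D (Suc i) j (t, x)) (at t) \<and>
        ((\<lambda>y. D i j (t, y)) has_real_derivative D i (Suc j) (t, x)) (at x))" and
    D_reg: "\<forall>i j. i + j \<le> 5 \<longrightarrow> continuous_on ({0<..<T} \<times> UNIV) (D i j) \<and>
        set_integrable lborel ({0<..<T} \<times> UNIV) (\<lambda>z. (D i j z)\<^sup>2)" and
    rest: "continuous_on ({0..T} \<times> UNIV) q" "\<forall>x. q (0, x) = q_init x"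
      "\<forall>t\<in>{0<..<T}. \<forall>x. ((\<lambda>y. Vd 0 ((od 0 y - q (t, y)) / \<epsilon>) * q (t, y))
         has_real_derivative \<nu> * (D 0 2 (t, x) - od 2 x) - D 1 0 (t, x)) (at x)"
    using assms(1) unfolding viscous_solution_def by blast
  have "mixed_H1_strip T q (D 1 0) (D 0 1) (D 1 1)"
  proof
    show "continuous_on ({0<..<T} \<times> UNIV) f" "set_integrable lborel ({0<..<T} \<times> UNIV) (\<lambda>w. (f w)\<^sup>2)"
      if "f \<in> {q, D 1 0, D 0 1, D 1 1}" for f
      using that D_reg D00 by auto
  qed (use assms(2) D_deriv D00 in \<open>fastforce+\<close>)
  moreover have "((\<lambda>y. D 0 1 (t, y)) has_real_derivative D 0 2 (t, x)) (at x)" if "t \<in> {0<..<T}" for t x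
    using D_deriv that by (auto simp: numeral_2_eq_2)
  ultimately show thesis
    using that rest by blast
qed

lemma viscous_flux_time_derivative_lower_bound:
  assumes V: "admissible_V Vd" and o: "admissible_o od" and "0 < \<epsilon>" "0 \<le> \<nu>"
    and c0: "0 \<le> Inf (range (od 0))"
    and flux: "((\<lambda>y. Vd 0 ((od 0 y - p y) / \<epsilon>) * p y) has_real_derivative \<nu> * (pxx - od 2 x) - pt) (at x)"
    and p': "(p has_real_derivative 0) (at x)" and "p x < 0" "0 \<le> pxx"
  shows "- (\<nu> * (SUP y. \<bar>od 2 y\<bar>))
           + (SUP y. \<bar>od 1 y\<bar>) * (SUP y\<in>{Inf (range (od 0))..}. \<bar>Vd 1 (y / \<epsilon>) / \<epsilon>\<bar>) * p x \<le> pt"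
proof (rule time_derivative_lower_bound_at_negative_minimum[OF flux _ _ p'])
  have "Inf (range (od 0)) \<le> od 0 x"
    by (rule admissible_o_Inf_range_le[OF o])
  then show "(Vd 0 has_real_derivative Vd 1 ((od 0 x - p x) / \<epsilon>)) (at ((od 0 x - p x) / \<epsilon>))"
    using c0 \<open>0 < \<epsilon>\<close> \<open>p x < 0\<close> by (intro admissible_V_has_derivative[OF V]) simp
  show "\<bar>Vd 1 ((od 0 x - p x) / \<epsilon>) / \<epsilon>\<bar> \<le> (SUP y\<in>{Inf (range (od 0))..}. \<bar>Vd 1 (y / \<epsilon>) / \<epsilon>\<bar>)"
    using \<open>Inf (range (od 0)) \<le> od 0 x\<close> \<open>p x < 0\<close>
    by (intro admissible_V_slope_le_SUP[OF V \<open>0 < \<epsilon>\<close> c0]) simp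
qed (use assms in \<open>auto intro!: admissible_o_has_derivative[OF o] admissible_o_abs_le_SUP[OF o]\<close>)

theorem mainTheorem6:
  fixes Vd od :: "nat \<Rightarrow> real \<Rightarrow> real"
    and q0 :: "real \<Rightarrow> real"
    and q :: "real \<times> real \<Rightarrow> real"
    and T \<nu> \<epsilon> :: real
  assumes "T > 0" and "\<nu> > 0" and "\<epsilon> > 0"
    and "admissible_V Vd"
    and "admissible_o od"
    and "bounded_variation q0" and "q0 \<in> borel_measurable lborel" and "\<forall>x. q0 x \<ge> 0"
    and "\<exists>\<delta>>0. AE x in lborel. od 0 x - q0 x \<ge> \<delta>"
    and "viscous_solution Vd od \<epsilon> \<nu> T (mollify \<nu> q0) q"
  shows "\<forall>t\<in>{0..T}. \<forall>x.
     q (t, x) \<ge>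
       - (\<nu> * (SUP y. \<bar>od 2 y\<bar>) /
            ((SUP y. \<bar>od 1 y\<bar>) * (SUP y\<in>{Inf (range (od 0))..}. \<bar>Vd 1 (y / \<epsilon>) / \<epsilon>\<bar>)))
         * (-1 + exp ((SUP y\<in>{Inf (range (od 0))..}. \<bar>Vd 1 (y / \<epsilon>) / \<epsilon>\<bar>)
                      * (SUP y. \<bar>od 1 y\<bar>) * t))"
proof -
  \<comment> \<open>Of the hypotheses on \<open>q0\<close> only \<open>q0 \<ge> 0\<close> matters here; the others serve the
    existence of \<open>q\<close>, which is assumed.\<close>
  obtain qt qx qtx qxx where strip: "mixed_H1_strip T q qt qx qtx"
    and deriv_xx: "\<And>t x. t \<in> {0<..<T} \<Longrightarrow> ((\<lambda>y. qx (t, y)) has_real_derivative qxx (t, x)) (at x)"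
    and cont: "continuous_on ({0..T} \<times> UNIV) q" and init: "\<And>x. q (0, x) = mollify \<nu> q0 x"
    and flux: "\<And>t x. t \<in> {0<..<T} \<Longrightarrow> ((\<lambda>y. Vd 0 ((od 0 y - q (t, y)) / \<epsilon>) * q (t, y))
           has_real_derivative \<nu> * (qxx (t, x) - od 2 x) - qt (t, x)) (at x)"
    by (rule viscous_solution_regularity[OF assms(10,1)]) (rule that)
  interpret mixed_H1_strip T q qt qx qtx by (rule strip)
  define S1 where "S1 = (SUP y. \<bar>od 1 y\<bar>)"
  define S2 where "S2 = (SUP y. \<bar>od 2 y\<bar>)"
  define K where "K = (SUP y\<in>{Inf (range (od 0))..}. \<bar>Vd 1 (y / \<epsilon>) / \<epsilon>\<bar>)"
  have c0: "0 \<le> Inf (range (od 0))"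
    by (rule admissible_o_Inf_range_nonneg[OF assms(5,8,9)])
  have "0 < K"
    unfolding K_def by (rule admissible_V_SUP_slope_pos[OF assms(4,3) c0])
  have "- (\<nu> * S2 / (S1 * K)) * (exp (S1 * K * t) - 1) \<le> q (t, x)" if "t \<in> {0..T}" for t x
  proof (rule exponential_lower_bound[OF cont deriv_t deriv_x deriv_xx vanishes_at_infinity])
    show "- (\<nu> * S2) + S1 * K * q (s, y) \<le> qt (s, y)"
      if "s \<in> {0<..<T}" "q (s, y) < 0" "qx (s, y) = 0" "0 \<le> qxx (s, y)" for s y
      unfolding S1_def S2_def K_def using assms(2,3) that deriv_x[OF that(1), of y]
      by (intro viscous_flux_time_derivative_lower_bound[OF assms(4,5) _ _ c0 flux]) auto
    show "0 \<le> q (0, y)" for y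
      unfolding init using assms(2,8) by (intro mollify_nonneg) auto
    show "S1 * K = 0 \<Longrightarrow> \<nu> * S2 = 0"
      using \<open>0 < K\<close> admissible_o_SUP_second_eq_0[OF assms(5)] by (simp add: S1_def S2_def)
  qed (use that \<open>0 < K\<close> assms(2) admissible_o_abs_le_SUP[OF assms(5), of 1 0]
         admissible_o_abs_le_SUP[OF assms(5), of 2 0] in \<open>auto simp: S1_def S2_def\<close>)
  then have "\<forall>t\<in>{0..T}. \<forall>x. q (t, x) \<ge> - (\<nu> * S2 / (S1 * K)) * (-1 + exp (K * S1 * t))"
    by (simp add: mult.commute[of K S1])
  then show ?thesis
    unfolding S1_def S2_def K_def .
qed

end
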